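(* Let $\mathcal{G}=(\mathcal{V},\mathcal{E},\mathbf{W})$ be a weighted undirected graph with symmetric nonnegative weights, and let $\mathcal{F}=\{\mathcal{C}_1,\dots,\mathcal{C}_{|\mathcal{F}|}\}$ be a partition of $\mathcal{V}$ into pairwise disjoint clusters. Let $x:\mathcal{V}\to\mathbb{R}$ be any graph signal observed on a sampling set $\mathcal{M}\subseteq\mathcal{V}$. Suppose $\|u\|_{\mathcal{E}\setminus\partial\mathcal{F}}\ge 2\|u\|_{\partial\mathcal{F}}$ for every $u:\mathcal{V}\to\mathbb{R}$ with $u[i]=0$ for all $i\in\mathcal{M}$. Then every solution $\hat{x}$ of $$\min_{\tilde{x}:\mathcal{V}\to\mathbb{R}}\|\tilde{x}\|_{\rm TV}\quad\text{subject to}\quad\tilde{x}[i]=x[i]\ \text{for all } i\in\mathcal{M}$$ satisfies $$\|x-\hat{x}\|_{\rm TV}\le 6\min_{a_1,\dots,a_{|\mathcal{F}|}\in\mathbb{R}}\Big\|x-\sum_{l=1}^{|\mathcal{F}|}a_l\mathcal{I}_{\mathcal{C}_l}\Big\|_{\rm TV}.$$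
   Context: $\mathcal{I}_{\mathcal{C}}[i]=1$ if $i\in\mathcal{C}$ and $0$ otherwise. For a set of edges $\mathcal{S}\subseteq\mathcal{E}$ and a signal $x:\mathcal{V}\to\mathbb{R}$, $\|x\|_{\mathcal{S}}=\sum_{\{i,j\}\in\mathcal{S}}W_{i,j}|x[i]-x[j]|$, and $\|x\|_{\rm TV}=\|x\|_{\mathcal{E}}$. The boundary of the partition is $\partial\mathcal{F}=\{\{i,j\}\in\mathcal{E}: i\in\mathcal{C}_l, j\in\mathcal{C}_{l'}, l\neq l'\}$. *)

theory Defs
  imports Main "HOL-Library.Indicator_Function"
begin

(* An undirected edge is a two-element set {i,j}.  Its contribution W i j * |x i - x j|
   is computed symmetrically: averaging over both orientations (equal when W is symmetric). *)
definition edge_term :: "('a \<Rightarrow> 'a \<Rightarrow> real) \<Rightarrow> ('a \<Rightarrow> real) \<Rightarrow> 'a set \<Rightarrow> real" where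
  "edge_term W x e = (\<Sum>(i,j) \<in> {(i,j). e = {i,j} \<and> i \<noteq> j}. W i j * \<bar>x i - x j\<bar>) / 2"

definition edge_norm :: "('a \<Rightarrow> 'a \<Rightarrow> real) \<Rightarrow> 'a set set \<Rightarrow> ('a \<Rightarrow> real) \<Rightarrow> real" where
  "edge_norm W S x = (\<Sum>e\<in>S. edge_term W x e)"

definition wgraph :: "'a set \<Rightarrow> 'a set set \<Rightarrow> ('a \<Rightarrow> 'a \<Rightarrow> real) \<Rightarrow> bool" where
  "wgraph V E W \<longleftrightarrow> finite V \<and> (\<forall>e\<in>E. \<exists>i j. i \<in> V \<and> j \<in> V \<and> i \<noteq> j \<and> e = {i,j})
     \<and> (\<forall>i j. W i j = W j i) \<and> (\<forall>i j. 0 \<le> W i j)"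

definition is_partition :: "'a set \<Rightarrow> 'a set set \<Rightarrow> bool" where
  "is_partition V F \<longleftrightarrow> \<Union>F = V \<and> (\<forall>C\<in>F. C \<noteq> {}) \<and>
     (\<forall>C\<in>F. \<forall>C'\<in>F. C \<noteq> C' \<longrightarrow> C \<inter> C' = {})"

definition boundary :: "'a set set \<Rightarrow> 'a set set \<Rightarrow> 'a set set" where
  "boundary E F = {e \<in> E. \<exists>i j C C'. e = {i,j} \<and> C \<in> F \<and> C' \<in> F \<and> i \<in> C \<and> j \<in> C' \<and> C \<noteq> C'}"

end

theory Submission
  imports Defs
begin

text \<open>Let \<open>u = x - xhat\<close>, fix a piecewise constant \<open>z = \<Sum>\<^sub>l a\<^sub>l \<I>\<^sub>C\<^sub>l\<close> and put \<open>v = x - z\<close>;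
  write \<open>T\<close> for the interior edges and \<open>S = \<partial>F\<close> for the boundary. Since \<open>z\<close> is constant
  across every interior edge, \<open>\<parallel>x\<parallel>\<^sub>T = \<parallel>v\<parallel>\<^sub>T\<close> and \<open>\<parallel>u\<parallel>\<^sub>T \<le> \<parallel>xhat\<parallel>\<^sub>T + \<parallel>v\<parallel>\<^sub>T\<close>.
  Optimality of \<open>xhat\<close> together with \<open>\<parallel>x\<parallel>\<^sub>S \<le> \<parallel>xhat\<parallel>\<^sub>S + \<parallel>u\<parallel>\<^sub>S\<close> gives
  \<open>\<parallel>xhat\<parallel>\<^sub>T \<le> \<parallel>v\<parallel>\<^sub>T + \<parallel>u\<parallel>\<^sub>S\<close>, hence \<open>\<parallel>u\<parallel>\<^sub>T \<le> 2\<parallel>v\<parallel>\<^sub>T + \<parallel>u\<parallel>\<^sub>S\<close>. As \<open>u\<close> vanishes on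
  the samples, the null space property \<open>\<parallel>u\<parallel>\<^sub>S \<le> \<parallel>u\<parallel>\<^sub>T / 2\<close> yields \<open>\<parallel>u\<parallel>\<^sub>T \<le> 4\<parallel>v\<parallel>\<^sub>T\<close>
  and \<open>\<parallel>u\<parallel>\<^sub>S \<le> 2\<parallel>v\<parallel>\<^sub>T\<close>, so \<open>\<parallel>u\<parallel>\<^sub>E \<le> 6\<parallel>v\<parallel>\<^sub>E\<close>.\<close>

lemma edge_term_cong:
  assumes "\<And>i j. e = {i,j} \<Longrightarrow> i \<noteq> j \<Longrightarrow> \<bar>a i - a j\<bar> = \<bar>b i - b j\<bar>"
  shows "edge_term W a e = edge_term W b e"
  unfolding edge_term_def using assms by (intro arg_cong[where f = "\<lambda>s. s / 2"] sum.cong) auto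

lemma edge_term_nonneg:
  assumes "\<forall>i j. 0 \<le> W i j"
  shows "0 \<le> edge_term W a e"
  unfolding edge_term_def using assms by (auto intro!: sum_nonneg divide_nonneg_pos)

lemma edge_term_add_le:
  assumes W: "\<forall>i j. 0 \<le> W i j"
  shows "edge_term W (\<lambda>i. a i + b i) e \<le> edge_term W a e + edge_term W b e"
proof -
  let ?P = "{(i,j). e = {i,j} \<and> i \<noteq> j}"
  have "(\<Sum>(i,j)\<in>?P. W i j * \<bar>(a i + b i) - (a j + b j)\<bar>)
        \<le> (\<Sum>(i,j)\<in>?P. W i j * \<bar>a i - a j\<bar> + W i j * \<bar>b i - b j\<bar>)"
  proof (rule sum_mono, clarify)
    fix i j
    have "\<bar>(a i + b i) - (a j + b j)\<bar> \<le> \<bar>a i - a j\<bar> + \<bar>b i - b j\<bar>"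
      by linarith
    then show "W i j * \<bar>(a i + b i) - (a j + b j)\<bar> \<le> W i j * \<bar>a i - a j\<bar> + W i j * \<bar>b i - b j\<bar>"
      using W by (metis distrib_left mult_left_mono)
  qed
  also have "\<dots> = (\<Sum>(i,j)\<in>?P. W i j * \<bar>a i - a j\<bar>) + (\<Sum>(i,j)\<in>?P. W i j * \<bar>b i - b j\<bar>)"
    by (simp add: sum.distrib split_def)
  finally show ?thesis
    unfolding edge_term_def add_divide_distrib[symmetric] by (rule divide_right_mono) simp
qed

lemma edge_norm_cong:
  assumes "\<And>e i j. e \<in> S \<Longrightarrow> e = {i,j} \<Longrightarrow> i \<noteq> j \<Longrightarrow> \<bar>a i - a j\<bar> = \<bar>b i - b j\<bar>"
  shows "edge_norm W S a = edge_norm W S b"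
  unfolding edge_norm_def using assms by (intro sum.cong refl edge_term_cong) blast

lemma edge_norm_nonneg:
  assumes "\<forall>i j. 0 \<le> W i j"
  shows "0 \<le> edge_norm W S a"
  unfolding edge_norm_def using edge_term_nonneg[OF assms] by (simp add: sum_nonneg)

lemma edge_norm_add_le:
  assumes "\<forall>i j. 0 \<le> W i j"
  shows "edge_norm W S (\<lambda>i. a i + b i) \<le> edge_norm W S a + edge_norm W S b"
  unfolding edge_norm_def sum.distrib[symmetric]
  by (rule sum_mono) (rule edge_term_add_le[OF assms])

lemma edge_norm_minus: "edge_norm W S (\<lambda>i. - a i) = edge_norm W S a"
  by (rule edge_norm_cong) linarith

lemma edge_norm_diff_le:
  assumes "\<forall>i j. 0 \<le> W i j"
  shows "edge_norm W S (\<lambda>i. a i - b i) \<le> edge_norm W S a + edge_norm W S b"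
  using edge_norm_add_le[OF assms, of S a "\<lambda>i. - b i"] edge_norm_minus[of W S b] by simp

lemma edge_norm_add_edgewise_constant:
  assumes "\<And>e i j. e \<in> S \<Longrightarrow> e = {i,j} \<Longrightarrow> z i = z j"
  shows "edge_norm W S (\<lambda>i. a i + z i) = edge_norm W S a"
proof (rule edge_norm_cong)
  fix e i j
  assume "e \<in> S" "e = {i,j}"
  then have "z i = z j"
    by (rule assms)
  then show "\<bar>(a i + z i) - (a j + z j)\<bar> = \<bar>a i - a j\<bar>"
    by simp
qed

lemma edge_norm_split:
  assumes "finite E" "S \<subseteq> E"
  shows "edge_norm W E a = edge_norm W (E - S) a + edge_norm W S a"
  unfolding edge_norm_def using assms by (metis sum.subset_diff)

lemma wgraph_finite_edges:
  assumes "wgraph V E W"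
  shows "finite E"
proof -
  have "E \<subseteq> Pow V" and "finite V"
    using assms unfolding wgraph_def by auto
  then show ?thesis by (meson finite_Pow_iff finite_subset)
qed

lemma interior_edge_in_cluster:
  assumes "wgraph V E W" "is_partition V F" "e \<in> E - boundary E F"
  obtains C where "C \<in> F" "e \<subseteq> C"
proof -
  obtain p q where pq: "p \<in> V" "q \<in> V" "e = {p,q}"
    using assms(1,3) unfolding wgraph_def by blast
  obtain C C' where C: "C \<in> F" "p \<in> C" "C' \<in> F" "q \<in> C'"
    using assms(2) pq unfolding is_partition_def by blast
  with pq assms(3) have "C = C'"
    unfolding boundary_def by blast
  with C pq that show ?thesis by blast
qed

lemma partition_step_function_eq:
  assumes "is_partition V F" "C \<in> F" "i \<in> C" "j \<in> C"
  shows "(\<Sum>D\<in>F. a D * indicator D i) = (\<Sum>D\<in>F. a D * (indicator D j :: real))"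
proof (rule sum.cong)
  fix D assume "D \<in> F"
  then have "D = C \<or> D \<inter> C = {}"
    using assms(1,2) unfolding is_partition_def by blast
  then show "a D * indicator D i = a D * (indicator D j :: real)"
    using assms(3,4) by (auto simp: indicator_def)
qed simp

lemma step_function_constant_on_interior_edges:
  assumes "wgraph V E W" "is_partition V F" "e \<in> E - boundary E F" "e = {i,j}"
  shows "(\<Sum>D\<in>F. a D * indicator D i) = (\<Sum>D\<in>F. a D * (indicator D j :: real))"
proof -
  obtain C where C: "C \<in> F" "e \<subseteq> C"
    using interior_edge_in_cluster[OF assms(1-3)] .
  with assms(4) have "i \<in> C" "j \<in> C"
    by auto
  then show ?thesis
    by (rule partition_step_function_eq[OF assms(2) C(1)])
qed

lemma tv_recovery_error_le:
  assumes W: "\<forall>i j. 0 \<le> W i j" and fin: "finite E" and SE: "S \<subseteq> E"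
    and z_const: "\<And>e i j. e \<in> E - S \<Longrightarrow> e = {i,j} \<Longrightarrow> z i = z j"
    and nsp: "edge_norm W (E - S) (\<lambda>i. x i - xhat i) \<ge> 2 * edge_norm W S (\<lambda>i. x i - xhat i)"
    and opt: "edge_norm W E xhat \<le> edge_norm W E x"
  shows "edge_norm W E (\<lambda>i. x i - xhat i) \<le> 6 * edge_norm W E (\<lambda>i. x i - z i)"
proof -
  let ?T = "E - S"
  define u where "u = (\<lambda>i. x i - xhat i)"
  define v where "v = (\<lambda>i. x i - z i)"
  have x_eq: "x = (\<lambda>i. v i + z i)" and u_eq: "u = (\<lambda>i. (v i - xhat i) + z i)"
    by (auto simp: u_def v_def)
  have shift: "edge_norm W ?T (\<lambda>i. a i + z i) = edge_norm W ?T a" for a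
    using z_const by (rule edge_norm_add_edgewise_constant)
  have xT: "edge_norm W ?T x = edge_norm W ?T v"
    unfolding x_eq by (rule shift)
  have uT: "edge_norm W ?T u \<le> edge_norm W ?T v + edge_norm W ?T xhat"
    using shift[of "\<lambda>i. v i - xhat i"] edge_norm_diff_le[OF W, of ?T v xhat] by (simp add: u_eq)
  have xS: "edge_norm W S x \<le> edge_norm W S xhat + edge_norm W S u"
    using edge_norm_add_le[OF W, of S xhat u] by (simp add: u_def)
  have "0 \<le> edge_norm W S v"
    by (rule edge_norm_nonneg[OF W])
  with opt xT uT xS nsp[folded u_def] edge_norm_split[OF fin SE, of W x]
    edge_norm_split[OF fin SE, of W xhat] edge_norm_split[OF fin SE, of W u]
    edge_norm_split[OF fin SE, of W v]
  show ?thesis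
    unfolding u_def[symmetric] v_def[symmetric] by linarith
qed

theorem lemma2:
  fixes V :: "'a set" and E :: "'a set set" and W :: "'a \<Rightarrow> 'a \<Rightarrow> real"
    and F :: "'a set set" and M :: "'a set" and x xhat :: "'a \<Rightarrow> real"
  assumes "wgraph V E W"
    and "is_partition V F"
    and "M \<subseteq> V"
    and nsp: "\<forall>u :: 'a \<Rightarrow> real. (\<forall>i\<in>M. u i = 0) \<longrightarrow>
              edge_norm W (E - boundary E F) u \<ge> 2 * edge_norm W (boundary E F) u"
    and feas: "\<forall>i\<in>M. xhat i = x i"
    and opt: "\<forall>y :: 'a \<Rightarrow> real. (\<forall>i\<in>M. y i = x i) \<longrightarrow> edge_norm W E xhat \<le> edge_norm W E y"
  shows "edge_norm W E (\<lambda>i. x i - xhat i) \<le>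
         6 * (INF a :: 'a set \<Rightarrow> real. edge_norm W E (\<lambda>i. x i - (\<Sum>C\<in>F. a C * indicator C i)))"
proof -
  have W: "\<forall>i j. 0 \<le> W i j"
    using assms(1) unfolding wgraph_def by blast
  have bound: "edge_norm W E (\<lambda>i. x i - xhat i)
          \<le> 6 * edge_norm W E (\<lambda>i. x i - (\<Sum>C\<in>F. a C * indicator C i))" for a
  proof (rule tv_recovery_error_le[OF W wgraph_finite_edges[OF assms(1)]])
    show "boundary E F \<subseteq> E"
      unfolding boundary_def by blast
    show "\<And>e i j. e \<in> E - boundary E F \<Longrightarrow> e = {i,j} \<Longrightarrow>
            (\<Sum>C\<in>F. a C * indicator C i) = (\<Sum>C\<in>F. a C * indicator C j)"
      using step_function_constant_on_interior_edges[OF assms(1,2)] by blast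
  qed (use nsp feas opt in auto)
  have "edge_norm W E (\<lambda>i. x i - xhat i) / 6
      \<le> (INF a. edge_norm W E (\<lambda>i. x i - (\<Sum>C\<in>F. a C * indicator C i)))"
    using bound by (intro cINF_greatest) (simp_all add: mult.commute)
  then show ?thesis
    by simp
qed

end
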